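(* Let $f$ be a real ternary cubic form ($r=3$) and let $g$ be the AMWP metric of $f$ on $\mathbb{R}^3+iW$. Write $f_{ikp}=\partial^3 f/\partial y_i\partial y_k\partial y_p$ (constants). Let $(g^{p\bar q})$ be the inverse matrix of $(g_{i\bar j})$. Then at every point of $\mathbb{R}^3+iW$ and for all $i,j,k,l\in\{1,2,3\}$, $$R_{i\bar jk\bar l}=g_{i\bar j}g_{k\bar l}+g_{i\bar l}g_{k\bar j}-\sum_{p,q}\frac{g^{p\bar q}f_{ikp}f_{jlq}}{64\,f(y)^2}.$$
   Context: Let $f(y_1,\dots,y_r)$ be a real cubic form on $\mathbb{R}^r$. Its index cone $W$ is the open cone of $y$ with $f(y)>0$ at which the Hessian $(\partial^2f/\partial y_i\partial y_j)(y)$ has signature $(1,r-1)$. On $\mathbb{R}^r+iW\subset\mathbb{C}^r$, with coordinates $t_j=x_j+iy_j$, the AMWP metric of $f$ is the Kähler metric with potential $K_0=-\log f(y)$. Thus $g_{i\bar j}=\partial^2K_0/\partial t_i\partial\bar t_j=-\tfrac14\partial^2\log f/\partial y_i\partial y_j$. Its curvature tensor is $$R_{i\bar jk\bar l}=\frac{\partial^2 g_{i\bar j}}{\partial t_k\partial\bar t_l}-\sum_{d,e}g^{\bar e d}\frac{\partial g_{i\bar e}}{\partial t_k}\frac{\partial g_{\bar j d}}{\partial\bar t_l},$$ where $(g^{\bar e d})$ is the inverse of $(g_{i\bar j})$. *)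

theory Defs
  imports "HOL-Analysis.Analysis"
begin

definition cubic_form3 :: "(real^3 \<Rightarrow> real) \<Rightarrow> bool" where
  "cubic_form3 f \<longleftrightarrow> (\<exists>C :: 3 \<Rightarrow> 3 \<Rightarrow> 3 \<Rightarrow> real.
      \<forall>y. f y = (\<Sum>a\<in>UNIV. \<Sum>b\<in>UNIV. \<Sum>c\<in>UNIV. C a b c * y$a * y$b * y$c))"

definition rpd :: "3 \<Rightarrow> (real^3 \<Rightarrow> real) \<Rightarrow> real^3 \<Rightarrow> real" where
  "rpd k h y = deriv (\<lambda>s. h (y + s *\<^sub>R axis k 1)) 0"

definition hessian3 :: "(real^3 \<Rightarrow> real) \<Rightarrow> real^3 \<Rightarrow> real^3^3" where
  "hessian3 h y = (\<chi> i j. rpd i (rpd j h) y)"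

definition pos_index :: "real^'n^'n \<Rightarrow> nat" where
  "pos_index A = Max {dim V | V. subspace V \<and> (\<forall>v\<in>V. v \<noteq> 0 \<longrightarrow> v \<bullet> (A *v v) > 0)}"

definition neg_index :: "real^'n^'n \<Rightarrow> nat" where
  "neg_index A = Max {dim V | V. subspace V \<and> (\<forall>v\<in>V. v \<noteq> 0 \<longrightarrow> v \<bullet> (A *v v) < 0)}"

definition has_signature :: "real^'n^'n \<Rightarrow> nat \<Rightarrow> nat \<Rightarrow> bool" where
  "has_signature A p q \<longleftrightarrow> pos_index A = p \<and> neg_index A = q"

definition index_cone3 :: "(real^3 \<Rightarrow> real) \<Rightarrow> (real^3) set" where
  "index_cone3 f = {y. f y > 0 \<and> has_signature (hessian3 f y) 1 2}"

definition dx :: "3 \<Rightarrow> (complex^3 \<Rightarrow> complex) \<Rightarrow> complex^3 \<Rightarrow> complex" where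
  "dx k F t = vector_derivative (\<lambda>s::real. F (t + axis k (complex_of_real s))) (at 0)"

definition dy :: "3 \<Rightarrow> (complex^3 \<Rightarrow> complex) \<Rightarrow> complex^3 \<Rightarrow> complex" where
  "dy k F t = vector_derivative (\<lambda>s::real. F (t + axis k (\<i> * complex_of_real s))) (at 0)"

definition dt :: "3 \<Rightarrow> (complex^3 \<Rightarrow> complex) \<Rightarrow> complex^3 \<Rightarrow> complex" where
  "dt k F t = (dx k F t - \<i> * dy k F t) / 2"

definition dtb :: "3 \<Rightarrow> (complex^3 \<Rightarrow> complex) \<Rightarrow> complex^3 \<Rightarrow> complex" where
  "dtb k F t = (dx k F t + \<i> * dy k F t) / 2"

definition Imv :: "complex^3 \<Rightarrow> real^3" where
  "Imv t = (\<chi> i. Im (t$i))"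

definition amwp_potential :: "(real^3 \<Rightarrow> real) \<Rightarrow> complex^3 \<Rightarrow> complex" where
  "amwp_potential f t = complex_of_real (- ln (f (Imv t)))"

definition amwp_g :: "(real^3 \<Rightarrow> real) \<Rightarrow> 3 \<Rightarrow> 3 \<Rightarrow> complex^3 \<Rightarrow> complex" where
  "amwp_g f i j t = dt i (dtb j (amwp_potential f)) t"

definition amwp_gmat :: "(real^3 \<Rightarrow> real) \<Rightarrow> complex^3 \<Rightarrow> complex^3^3" where
  "amwp_gmat f t = (\<chi> i j. amwp_g f i j t)"

definition amwp_ginv :: "(real^3 \<Rightarrow> real) \<Rightarrow> complex^3 \<Rightarrow> 3 \<Rightarrow> 3 \<Rightarrow> complex" where
  "amwp_ginv f t e d = matrix_inv (amwp_gmat f t) $ e $ d"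

text \<open>R_{i\bar j k\bar l}; note g_{\bar j d} = g_{d \bar j}.\<close>
definition amwp_R :: "(real^3 \<Rightarrow> real) \<Rightarrow> 3 \<Rightarrow> 3 \<Rightarrow> 3 \<Rightarrow> 3 \<Rightarrow> complex^3 \<Rightarrow> complex" where
  "amwp_R f i j k l t =
     dt k (dtb l (amwp_g f i j)) t
     - (\<Sum>d\<in>UNIV. \<Sum>e\<in>UNIV. amwp_ginv f t e d * dt k (amwp_g f i e) t * dtb l (amwp_g f d j) t)"

definition f3 :: "(real^3 \<Rightarrow> real) \<Rightarrow> 3 \<Rightarrow> 3 \<Rightarrow> 3 \<Rightarrow> real^3 \<Rightarrow> real" where
  "f3 f i k p y = rpd i (rpd k (rpd p f)) y"

end

theory Submission
  imports Defs
begin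

(*
  The potential -log f(Im t) depends only on Im t, and for
  such functions d/dt_k = -i/2 d/dy_k and d/d(bar t_k) = i/2 d/dy_k.  Hence the metric
  g_ij = -(log f)_ij / 4 is real, and the curvature tensor becomes
      R_ijkl = -(log f)_ijlk / 16 - sum_{d,e} g^{ed} (log f)_eik (log f)_djl / 64.
  The theorem is therefore an algebraic identity among the derivatives of f.  It follows from
  (i) closed formulas for the derivatives of log f up to order four; (ii) the Euler identities
  of a cubic (sum_c f_ic y_c = 2 f_i, sum_i f_i y_i = 3 f), which give g y = grad f / (4f) and
  hence g^{-1} grad f = 4 f y; (iii) a decomposition of (log f)_eik into f_eik/f plus multiples
  of g_e. and f_e, each of which contracts with g^{-1} in closed form.  Invertibility of g comes
  from the signature hypothesis: a symmetric matrix of signature (p,q) with p + q = n is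
  nondegenerate, and nondegeneracy of the Hessian of f passes to g.
*)

type_synonym 'n tensor3 = "'n \<Rightarrow> 'n \<Rightarrow> 'n \<Rightarrow> real"

(* Full symmetrisation of a coefficient tensor; it is the (constant) third partial
   derivative of the cubic form with coefficients C. *)
definition sym3 :: "'n tensor3 \<Rightarrow> 'n tensor3" where
  "sym3 C a b c = C a b c + C a c b + C b a c + C b c a + C c a b + C c b a"

definition cform :: "'n::finite tensor3 \<Rightarrow> real^'n \<Rightarrow> real" where
  "cform C y = (\<Sum>a\<in>UNIV. \<Sum>b\<in>UNIV. \<Sum>c\<in>UNIV. C a b c * y$a * y$b * y$c)"

(* Its gradient and Hessian, written in closed form; the derivative lemmas below show
   that they are the first and second partial derivatives. *)
definition cform_d1 :: "'n::finite tensor3 \<Rightarrow> 'n \<Rightarrow> real^'n \<Rightarrow> real" where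
  "cform_d1 C i y = (\<Sum>b\<in>UNIV. \<Sum>c\<in>UNIV. sym3 C i b c * y$b * y$c) / 2"

definition cform_d2 :: "'n::finite tensor3 \<Rightarrow> 'n \<Rightarrow> 'n \<Rightarrow> real^'n \<Rightarrow> real" where
  "cform_d2 C i j y = (\<Sum>c\<in>UNIV. sym3 C i j c * y$c)"

lemma sym3_swap12: "sym3 C a b c = sym3 C b a c"
  and sym3_swap23: "sym3 C a b c = sym3 C a c b"
  by (simp_all add: sym3_def)

lemma axis_nth: "(y + s *\<^sub>R axis k 1) $ a = y $ a + s * of_bool (a = k)"
  by (simp add: axis_def)

lemma quadratic_sum_swap:
  fixes X :: "'n::finite \<Rightarrow> 'n \<Rightarrow> real"
  shows "(\<Sum>b\<in>UNIV. \<Sum>c\<in>UNIV. X c b * y$b * y$c) = (\<Sum>b\<in>UNIV. \<Sum>c\<in>UNIV. X b c * y$b * y$c)"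
  by (subst sum.swap) (simp add: mult.commute mult.left_commute)

lemma sum3_delta:
  fixes F :: "'n::finite tensor3"
  shows "(\<Sum>a\<in>UNIV. \<Sum>b\<in>UNIV. \<Sum>c\<in>UNIV. F a b c * of_bool (a = k)) = (\<Sum>b\<in>UNIV. \<Sum>c\<in>UNIV. F k b c)"
    and "(\<Sum>a\<in>UNIV. \<Sum>b\<in>UNIV. \<Sum>c\<in>UNIV. F a b c * of_bool (b = k)) = (\<Sum>a\<in>UNIV. \<Sum>c\<in>UNIV. F a k c)"
    and "(\<Sum>a\<in>UNIV. \<Sum>b\<in>UNIV. \<Sum>c\<in>UNIV. F a b c * of_bool (c = k)) = (\<Sum>a\<in>UNIV. \<Sum>b\<in>UNIV. F a b k)"
  by (simp_all add: sum_distrib_right[symmetric])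

lemma cform_deriv:
  "((\<lambda>s. cform C (y + s *\<^sub>R axis k 1)) has_real_derivative cform_d1 C k y) (at 0)"
proof -
  have "((\<lambda>s. cform C (y + s *\<^sub>R axis k 1)) has_real_derivative
     (\<Sum>a\<in>UNIV. \<Sum>b\<in>UNIV. \<Sum>c\<in>UNIV. C a b c * y$b * y$c * of_bool (a = k))
   + (\<Sum>a\<in>UNIV. \<Sum>b\<in>UNIV. \<Sum>c\<in>UNIV. C a b c * y$a * y$c * of_bool (b = k))
   + (\<Sum>a\<in>UNIV. \<Sum>b\<in>UNIV. \<Sum>c\<in>UNIV. C a b c * y$a * y$b * of_bool (c = k))) (at 0)"
    unfolding cform_def axis_nth
    by (auto intro!: derivative_eq_intros simp: algebra_simps sum.distrib)
  moreover have "cform_d1 C k y = (\<Sum>b\<in>UNIV. \<Sum>c\<in>UNIV. C k b c * y$b * y$c)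
      + (\<Sum>a\<in>UNIV. \<Sum>c\<in>UNIV. C a k c * y$a * y$c) + (\<Sum>a\<in>UNIV. \<Sum>b\<in>UNIV. C a b k * y$a * y$b)"
    using quadratic_sum_swap[of "\<lambda>c b. C k c b" y] quadratic_sum_swap[of "\<lambda>c b. C c k b" y]
      quadratic_sum_swap[of "\<lambda>c b. C c b k" y]
    unfolding cform_d1_def sym3_def by (simp add: sum.distrib algebra_simps)
  ultimately show ?thesis by (simp only: sum3_delta)
qed

lemma sum2_delta:
  fixes F :: "'n::finite \<Rightarrow> 'n \<Rightarrow> real"
  shows "(\<Sum>b\<in>UNIV. \<Sum>c\<in>UNIV. F b c * of_bool (b = k)) = (\<Sum>c\<in>UNIV. F k c)"
  by (simp add: sum_distrib_right[symmetric])

lemma cform_d1_deriv: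
  "((\<lambda>s. cform_d1 C i (y + s *\<^sub>R axis k 1)) has_real_derivative cform_d2 C i k y) (at 0)"
proof -
  have "((\<lambda>s. cform_d1 C i (y + s *\<^sub>R axis k 1)) has_real_derivative
     ((\<Sum>b\<in>UNIV. \<Sum>c\<in>UNIV. sym3 C i b c * y$c * of_bool (b = k))
    + (\<Sum>b\<in>UNIV. \<Sum>c\<in>UNIV. sym3 C i b c * y$b * of_bool (c = k))) / 2) (at 0)"
    unfolding cform_d1_def axis_nth
    by (auto intro!: derivative_eq_intros simp: algebra_simps sum.distrib)
  moreover have "(\<Sum>b\<in>UNIV. \<Sum>c\<in>UNIV. sym3 C i b c * y$c * of_bool (b = k)) = cform_d2 C i k y"
    unfolding cform_d2_def by (rule sum2_delta)
  moreover have "(\<Sum>b\<in>UNIV. \<Sum>c\<in>UNIV. sym3 C i b c * y$b * of_bool (c = k)) = cform_d2 C i k y"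
    unfolding cform_d2_def by (simp add: sym3_swap23[of C i _ k])
  ultimately show ?thesis by simp
qed

lemma cform_d2_deriv:
  "((\<lambda>s. cform_d2 C i j (y + s *\<^sub>R axis k 1)) has_real_derivative sym3 C i j k) (at 0)"
  unfolding cform_d2_def axis_nth
  by (auto intro!: derivative_eq_intros simp: algebra_simps)

lemma cform_d2_sym: "cform_d2 C i j y = cform_d2 C j i y"
  unfolding cform_d2_def by (metis sym3_swap12)

lemma cform_d2_euler: "(\<Sum>c\<in>UNIV. cform_d2 C i c y * y$c) = 2 * cform_d1 C i y"
  unfolding cform_d2_def cform_d1_def
  by (simp add: sum_distrib_left sum_distrib_right mult_ac)

definition trilin :: "'n::finite tensor3 \<Rightarrow> real^'n \<Rightarrow> real" where
  "trilin X y = (\<Sum>a\<in>UNIV. \<Sum>b\<in>UNIV. \<Sum>c\<in>UNIV. X a b c * (y$a * y$b * y$c))"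

lemma trilin_swap12: "trilin X y = trilin (\<lambda>a b c. X b a c) y"
  unfolding trilin_def by (subst sum.swap) (simp add: mult_ac)

lemma trilin_swap23: "trilin X y = trilin (\<lambda>a b c. X a c b) y"
  unfolding trilin_def by (rule sum.cong[OF refl], subst sum.swap, simp add: mult_ac)

lemma trilin_sym3: "trilin (sym3 C) y = 6 * cform C y"
proof -
  have "trilin (sym3 C) y = trilin C y + trilin (\<lambda>a b c. C a c b) y + trilin (\<lambda>a b c. C b a c) y
      + trilin (\<lambda>a b c. C b c a) y + trilin (\<lambda>a b c. C c a b) y + trilin (\<lambda>a b c. C c b a) y"
    unfolding sym3_def trilin_def by (simp add: sum.distrib algebra_simps)
  also have "\<dots> = 6 * trilin C y"
    using trilin_swap12[of C y] trilin_swap23[of C y] trilin_swap12[of "\<lambda>a b c. C a c b" y]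
      trilin_swap23[of "\<lambda>a b c. C b a c" y] trilin_swap12[of "\<lambda>a b c. C c a b" y]
    by simp
  also have "trilin C y = cform C y" unfolding trilin_def cform_def by (simp add: mult_ac)
  finally show ?thesis .
qed

lemma cform_d1_euler: "(\<Sum>i\<in>UNIV. cform_d1 C i y * y$i) = 3 * cform C y"
proof -
  have "(\<Sum>i\<in>UNIV. cform_d1 C i y * y$i) = trilin (sym3 C) y / 2"
    unfolding cform_d1_def trilin_def by (simp add: sum_distrib_left sum_distrib_right sum_divide_distrib mult_ac)
  then show ?thesis by (simp add: trilin_sym3)
qed

(* The partial derivatives of log f up to order four, expressed through the derivatives
   of f (the fourth derivative of f vanishes).  logd4 is written in symmetric form. *)
definition logd1 :: "'n::finite tensor3 \<Rightarrow> 'n \<Rightarrow> real^'n \<Rightarrow> real" where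
  "logd1 C i y = cform_d1 C i y / cform C y"

definition logd2 :: "'n::finite tensor3 \<Rightarrow> 'n \<Rightarrow> 'n \<Rightarrow> real^'n \<Rightarrow> real" where
  "logd2 C i j y = cform_d2 C i j y / cform C y - cform_d1 C i y * cform_d1 C j y / cform C y ^ 2"

definition logd3 :: "'n::finite tensor3 \<Rightarrow> 'n \<Rightarrow> 'n \<Rightarrow> 'n \<Rightarrow> real^'n \<Rightarrow> real" where
  "logd3 C i j k y = sym3 C i j k / cform C y
     - (cform_d2 C i j y * cform_d1 C k y + cform_d2 C i k y * cform_d1 C j y + cform_d2 C j k y * cform_d1 C i y) / cform C y ^ 2
     + 2 * cform_d1 C i y * cform_d1 C j y * cform_d1 C k y / cform C y ^ 3"

definition logd4 :: "'n::finite tensor3 \<Rightarrow> 'n \<Rightarrow> 'n \<Rightarrow> 'n \<Rightarrow> 'n \<Rightarrow> real^'n \<Rightarrow> real" where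
  "logd4 C i j k l y =
     - (sym3 C i j k * cform_d1 C l y + sym3 C i j l * cform_d1 C k y
        + sym3 C i k l * cform_d1 C j y + sym3 C j k l * cform_d1 C i y
        + cform_d2 C i j y * cform_d2 C k l y + cform_d2 C i k y * cform_d2 C j l y
        + cform_d2 C i l y * cform_d2 C j k y) / cform C y ^ 2
     + 2 * (cform_d2 C i j y * cform_d1 C k y * cform_d1 C l y
        + cform_d2 C i k y * cform_d1 C j y * cform_d1 C l y
        + cform_d2 C i l y * cform_d1 C j y * cform_d1 C k y
        + cform_d2 C j k y * cform_d1 C i y * cform_d1 C l y
        + cform_d2 C j l y * cform_d1 C i y * cform_d1 C k y
        + cform_d2 C k l y * cform_d1 C i y * cform_d1 C j y) / cform C y ^ 3
     - 6 * cform_d1 C i y * cform_d1 C j y * cform_d1 C k y * cform_d1 C l y / cform C y ^ 4"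

(* Each logd(n+1) is the partial derivative of logd n; this is what the Wirtinger
   derivatives of the potential -log f(Im t) produce. *)
lemma neg_log_cform_deriv:
  assumes "cform C y > 0"
  shows "((\<lambda>s. - ln (cform C (y + s *\<^sub>R axis k 1))) has_real_derivative - logd1 C k y) (at 0)"
  unfolding logd1_def using assms by (auto intro!: derivative_eq_intros cform_deriv)

lemma logd1_deriv:
  assumes "cform C y \<noteq> 0"
  shows "((\<lambda>s. logd1 C i (y + s *\<^sub>R axis k 1)) has_real_derivative logd2 C i k y) (at 0)"
  unfolding logd1_def logd2_def using assms
  by (auto intro!: derivative_eq_intros cform_deriv cform_d1_deriv simp: field_simps power2_eq_square)

lemma logd2_deriv:
  assumes "cform C y \<noteq> 0"
  shows "((\<lambda>s. logd2 C i j (y + s *\<^sub>R axis k 1)) has_real_derivative logd3 C i j k y) (at 0)"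
  unfolding logd2_def logd3_def using assms
  by (auto intro!: derivative_eq_intros cform_deriv cform_d1_deriv cform_d2_deriv
      simp: field_simps power2_eq_square) algebra

lemma logd3_deriv:
  assumes "cform C y \<noteq> 0"
  shows "((\<lambda>s. logd3 C i j k (y + s *\<^sub>R axis l 1)) has_real_derivative logd4 C i j k l y) (at 0)"
  unfolding logd3_def logd4_def using assms
  by (auto intro!: derivative_eq_intros cform_deriv cform_d1_deriv cform_d2_deriv
      simp: field_simps power2_eq_square) algebra

lemma index_attained:
  fixes P :: "real^'n \<Rightarrow> bool"
  shows "\<exists>V. subspace V \<and> (\<forall>v\<in>V. v \<noteq> 0 \<longrightarrow> P v)
           \<and> dim V = Max {dim V | V. subspace V \<and> (\<forall>v\<in>V. v \<noteq> 0 \<longrightarrow> P v)}"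
proof -
  let ?D = "{dim V | V. subspace V \<and> (\<forall>v\<in>V. v \<noteq> 0 \<longrightarrow> P v)}"
  have "finite ?D"
    by (rule finite_subset[of _ "{..CARD('n)}"]) (auto intro: dim_subset_UNIV_cart)
  moreover have "?D \<noteq> {}"
    using subspace_0 by (auto intro!: exI[of _ "{0}"])
  ultimately have "Max ?D \<in> ?D" by (rule Max_in)
  then show ?thesis by auto
qed

lemma symmetric_form_orth:
  fixes A :: "real^'n^'n"
  assumes "transpose A = A"
  shows "p \<bullet> (A *v n) = n \<bullet> (A *v p)"
  by (metis assms dot_lmul_matrix inner_commute transpose_matrix_vector)

(* The positive and negative definite subspaces span the
   whole space, and a kernel vector u + v would give u.Au = v.Av with opposite signs. *)
lemma signature_nondegenerate:
  fixes A :: "real^'n^'n"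
  assumes sym: "transpose A = A" and sg: "has_signature A p q" and full: "p + q = CARD('n)"
    and w: "A *v w = 0"
  shows "w = 0"
proof -
  obtain P where P: "subspace P" "\<And>v. v \<in> P \<Longrightarrow> v \<noteq> 0 \<Longrightarrow> v \<bullet> (A *v v) > 0" "dim P = p"
    using index_attained[of "\<lambda>v. v \<bullet> (A *v v) > 0"] sg
    unfolding has_signature_def pos_index_def by auto
  obtain N where N: "subspace N" "\<And>v. v \<in> N \<Longrightarrow> v \<noteq> 0 \<Longrightarrow> v \<bullet> (A *v v) < 0" "dim N = q"
    using index_attained[of "\<lambda>v. v \<bullet> (A *v v) < 0"] sg
    unfolding has_signature_def neg_index_def by auto
  have "P \<inter> N \<subseteq> {0}" using P(2) N(2) by fastforce
  then have "dim (P \<inter> N) = 0" by simp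
  then have "dim {x + y |x y. x \<in> P \<and> y \<in> N} = CARD('n)"
    using dim_sums_Int[OF P(1) N(1)] P(3) N(3) full by linarith
  then have "span {x + y |x y. x \<in> P \<and> y \<in> N} = UNIV"
    by (simp add: dim_eq_full[symmetric])
  moreover have "span {x + y |x y. x \<in> P \<and> y \<in> N} = {x + y |x y. x \<in> P \<and> y \<in> N}"
    using subspace_sums[OF P(1) N(1)] by (rule span_eq_iff[THEN iffD2])
  ultimately have "w \<in> {x + y |x y. x \<in> P \<and> y \<in> N}" by simp
  then obtain u v where uv: "u \<in> P" "v \<in> N" "w = u + v" by blast
  have "u \<bullet> (A *v w) = 0" "v \<bullet> (A *v w) = 0" using w by simp_all
  then have "u \<bullet> (A *v u) + u \<bullet> (A *v v) = 0" "v \<bullet> (A *v u) + v \<bullet> (A *v v) = 0"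
    unfolding uv(3) by (simp_all add: matrix_vector_right_distrib inner_add_right)
  then have eq: "u \<bullet> (A *v u) = v \<bullet> (A *v v)"
    using symmetric_form_orth[OF sym, of u v] by linarith
  have "u = 0"
    using P(2)[OF uv(1)] N(2)[OF uv(2)] eq by (cases "v = 0") fastforce+
  moreover have "v = 0"
    using N(2)[OF uv(2)] eq \<open>u = 0\<close> by fastforce
  ultimately show ?thesis using uv(3) by simp
qed

(* The real matrix of the AMWP metric: g_ij = -(log f)_ij / 4. *)
definition gram :: "'n::finite tensor3 \<Rightarrow> real^'n \<Rightarrow> real^'n^'n" where
  "gram C y = (\<chi> i j. - logd2 C i j y / 4)"

lemma logd2_sym: "logd2 C i j y = logd2 C j i y"
  unfolding logd2_def by (simp add: cform_d2_sym mult.commute)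

lemma gram_sym: "transpose (gram C y) = gram C y"
  by (simp add: vec_eq_iff transpose_def gram_def logd2_sym)

lemma gram_entry:
  assumes "cform C y \<noteq> 0"
  shows "gram C y $ i $ j = cform_d1 C i y * cform_d1 C j y / (4 * cform C y ^ 2) - cform_d2 C i j y / (4 * cform C y)"
  using assms by (simp add: gram_def logd2_def field_simps)

lemma gram_euler:
  assumes "cform C y \<noteq> 0"
  shows "(\<Sum>j\<in>UNIV. gram C y $ i $ j * y$j) = cform_d1 C i y / (4 * cform C y)"
proof -
  have "(\<Sum>j\<in>UNIV. gram C y $ i $ j * y$j)
      = cform_d1 C i y / (4 * cform C y ^ 2) * (\<Sum>j\<in>UNIV. cform_d1 C j y * y$j)
        - (\<Sum>j\<in>UNIV. cform_d2 C i j y * y$j) / (4 * cform C y)"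
    by (simp add: gram_entry[OF assms] sum_subtractf sum_distrib_left sum_divide_distrib
        right_diff_distrib mult_ac)
  also have "\<dots> = cform_d1 C i y / (4 * cform C y)"
    unfolding cform_d1_euler cform_d2_euler using assms by (simp add: field_simps power2_eq_square)
  finally show ?thesis .
qed

(* Nondegeneracy passes from the Hessian of f to g: if g v = 0 then H (v - c y) = 0 for
   c = (grad f . v)/(2f), so v is a multiple of y, and the Euler identity forces c = 0. *)
lemma gram_nondegenerate:
  assumes f: "cform C y \<noteq> 0"
    and hess: "\<And>w. (\<chi> i j. cform_d2 C i j y) *v w = 0 \<Longrightarrow> w = 0"
    and v: "gram C y *v v = 0"
  shows "v = 0"
proof -
  define \<beta> where "\<beta> = (\<Sum>j\<in>UNIV. cform_d1 C j y * v$j)"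
  define c where "c = \<beta> / (2 * cform C y)"
  have Hv: "(\<Sum>j\<in>UNIV. cform_d2 C i j y * v$j) = cform_d1 C i y * \<beta> / cform C y" for i
  proof -
    have "0 = (\<Sum>j\<in>UNIV. gram C y $ i $ j * v$j)"
      using v by (simp add: vec_eq_iff matrix_vector_mult_def)
    also have "\<dots> = cform_d1 C i y * \<beta> / (4 * cform C y ^ 2) - (\<Sum>j\<in>UNIV. cform_d2 C i j y * v$j) / (4 * cform C y)"
      unfolding \<beta>_def
      by (simp add: gram_entry[OF f] sum_subtractf sum_distrib_left sum_divide_distrib
          right_diff_distrib mult_ac)
    finally show ?thesis using f by (simp add: field_simps power2_eq_square)
  qed
  have "(\<chi> i j. cform_d2 C i j y) *v (v - c *\<^sub>R y) = 0"
  proof -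
    have "((\<chi> i j. cform_d2 C i j y) *v (v - c *\<^sub>R y)) $ i
        = (\<Sum>j\<in>UNIV. cform_d2 C i j y * v$j) - c * (\<Sum>j\<in>UNIV. cform_d2 C i j y * y$j)" for i
      by (simp add: matrix_vector_mult_def algebra_simps sum_subtractf sum_distrib_left)
    then show ?thesis
      using f by (simp add: vec_eq_iff Hv cform_d2_euler c_def)
  qed
  then have vc: "v = c *\<^sub>R y" using hess[of "v - c *\<^sub>R y"] by simp
  have "\<beta> = c * (3 * cform C y)"
    unfolding \<beta>_def vc cform_d1_euler[symmetric] by (simp add: sum_distrib_left mult_ac)
  then have "c = 0" using f unfolding c_def by (simp add: field_simps)
  then show ?thesis using vc by simp
qed

lemma gram_symmetric_inverse:
  assumes "cform C y \<noteq> 0" and "\<And>w. (\<chi> i j. cform_d2 C i j y) *v w = 0 \<Longrightarrow> w = 0"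
  obtains B where "B ** gram C y = mat 1" "gram C y ** B = mat 1" "transpose B = B"
proof -
  obtain B where left: "B ** gram C y = mat 1"
    using matrix_left_invertible_ker[of "gram C y"] gram_nondegenerate[OF assms] by blast
  then have right: "gram C y ** B = mat 1" using matrix_left_right_inverse by blast
  have "transpose B ** gram C y = mat 1"
    using right matrix_transpose_mul[of "gram C y" B] gram_sym[of C y] by simp
  then have "transpose B = transpose B ** (gram C y ** B)" using right by simp
  also have "\<dots> = B" using \<open>transpose B ** gram C y = mat 1\<close> by (simp add: matrix_mul_assoc)
  finally show ?thesis using that left right by blast
qed

(* The third derivative of log f splits as
   (log f)_eik = f_eik/f + (4 f_k/f) g_ei + (4 f_i/f) g_ek - (f_ik/f^2) f_e,
   where every term except the first contracts with the inverse metric in closed form. *)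
lemma logd3_decomp:
  assumes "cform C y \<noteq> 0"
  shows "logd3 C e i k y = (1 / cform C y) * sym3 C e i k
     + (4 * cform_d1 C k y / cform C y) * gram C y $ e $ i + (4 * cform_d1 C i y / cform C y) * gram C y $ e $ k
     + (- cform_d2 C i k y / cform C y ^ 2) * cform_d1 C e y"
  using assms unfolding logd3_def gram_entry[OF assms]
  by (simp add: cform_d2_sym[of C k e] field_simps) (simp add: algebra_simps eval_nat_numeral)

definition bilin :: "real^'n^'n \<Rightarrow> ('n::finite \<Rightarrow> real) \<Rightarrow> ('n \<Rightarrow> real) \<Rightarrow> real" where
  "bilin M a b = (\<Sum>d\<in>UNIV. \<Sum>e\<in>UNIV. M $ e $ d * a e * b d)"

lemma bilin_add_left: "bilin M (\<lambda>e. a e + a' e) b = bilin M a b + bilin M a' b"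
  and bilin_add_right: "bilin M a (\<lambda>d. b d + b' d) = bilin M a b + bilin M a b'"
  and bilin_scale_left: "bilin M (\<lambda>e. x * a e) b = x * bilin M a b"
  and bilin_scale_right: "bilin M a (\<lambda>d. x * b d) = x * bilin M a b"
  unfolding bilin_def by (simp_all add: sum.distrib sum_distrib_left algebra_simps)

lemma bilin_gram_left:
  assumes "M ** gram C y = mat 1" "transpose M = M"
  shows "bilin M (\<lambda>e. gram C y $ e $ i) b = b i"
proof -
  have "bilin M (\<lambda>e. gram C y $ e $ i) b = (\<Sum>d\<in>UNIV. (M ** gram C y) $ d $ i * b d)"
    using assms(2) unfolding bilin_def matrix_matrix_mult_def
    by (simp add: sum_distrib_right vec_eq_iff transpose_def)
  then show ?thesis using assms(1) by (simp add: mat_def flip: of_bool_def)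
qed

lemma bilin_gram_right:
  assumes "M ** gram C y = mat 1"
  shows "bilin M a (\<lambda>d. gram C y $ d $ j) = a j"
proof -
  have "bilin M a (\<lambda>d. gram C y $ d $ j) = (\<Sum>e\<in>UNIV. a e * (M ** gram C y) $ e $ j)"
    unfolding bilin_def matrix_matrix_mult_def
    by (subst sum.swap) (simp add: sum_distrib_left mult_ac)
  then show ?thesis using assms by (simp add: mat_def flip: of_bool_def)
qed

lemma inverse_gram_grad:
  assumes f: "cform C y \<noteq> 0" and inv: "M ** gram C y = mat 1"
  shows "(\<Sum>d\<in>UNIV. M $ e $ d * cform_d1 C d y) = 4 * cform C y * y $ e"
proof -
  have "cform_d1 C d y = 4 * cform C y * (\<Sum>j\<in>UNIV. gram C y $ d $ j * y $ j)" for d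
    using gram_euler[OF f, of d] f by simp
  then have "(\<Sum>d\<in>UNIV. M $ e $ d * cform_d1 C d y)
      = 4 * cform C y * (\<Sum>d\<in>UNIV. \<Sum>j\<in>UNIV. M $ e $ d * gram C y $ d $ j * y $ j)"
    by (simp add: sum_distrib_left mult_ac)
  also have "\<dots> = 4 * cform C y * (\<Sum>j\<in>UNIV. (M ** gram C y) $ e $ j * y $ j)"
    unfolding matrix_matrix_mult_def by (subst sum.swap) (simp add: sum_distrib_right)
  finally show ?thesis using inv by (simp add: mat_def flip: of_bool_def)
qed

lemma bilin_grad_left:
  assumes "cform C y \<noteq> 0" "M ** gram C y = mat 1" "transpose M = M"
  shows "bilin M (\<lambda>e. cform_d1 C e y) b = 4 * cform C y * (\<Sum>d\<in>UNIV. y $ d * b d)"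
proof -
  have "bilin M (\<lambda>e. cform_d1 C e y) b = (\<Sum>d\<in>UNIV. (\<Sum>e\<in>UNIV. M $ d $ e * cform_d1 C e y) * b d)"
    using assms(3) unfolding bilin_def
    by (simp add: sum_distrib_right vec_eq_iff transpose_def)
  then show ?thesis
    unfolding inverse_gram_grad[OF assms(1,2)] by (simp add: sum_distrib_left mult_ac)
qed

lemma bilin_grad_right:
  assumes "cform C y \<noteq> 0" "M ** gram C y = mat 1"
  shows "bilin M a (\<lambda>d. cform_d1 C d y) = 4 * cform C y * (\<Sum>e\<in>UNIV. a e * y $ e)"
proof -
  have "bilin M a (\<lambda>d. cform_d1 C d y) = (\<Sum>e\<in>UNIV. a e * (\<Sum>d\<in>UNIV. M $ e $ d * cform_d1 C d y))"
    unfolding bilin_def by (subst sum.swap) (simp add: sum_distrib_left mult_ac)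
  then show ?thesis
    unfolding inverse_gram_grad[OF assms] by (simp add: sum_distrib_left mult_ac)
qed

lemma sym3_euler_first: "(\<Sum>e\<in>UNIV. sym3 C e i k * y$e) = cform_d2 C i k y"
  and sym3_euler_first': "(\<Sum>d\<in>UNIV. y$d * sym3 C d i k) = cform_d2 C i k y"
  unfolding cform_d2_def by (simp_all add: sym3_def algebra_simps)

lemma cform_d1_euler': "(\<Sum>d\<in>UNIV. y$d * cform_d1 C d y) = 3 * cform C y"
  using cform_d1_euler[of C y] by (simp add: mult.commute)

(* After decomposing both third
   derivatives and contracting, what remains is a rational identity. *)
lemma curvature_identity:
  assumes f: "cform C y \<noteq> 0" and inv: "M ** gram C y = mat 1" and sym: "transpose M = M"
  shows "- logd4 C i j l k y / 16 - bilin M (\<lambda>e. logd3 C e i k y) (\<lambda>d. logd3 C d j l y) / 64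
     = gram C y $ i $ j * gram C y $ k $ l + gram C y $ i $ l * gram C y $ k $ j
       - bilin M (\<lambda>e. sym3 C e i k) (\<lambda>d. sym3 C d j l) / (64 * cform C y ^ 2)"
  unfolding logd3_decomp[OF f] bilin_add_left bilin_add_right bilin_scale_left bilin_scale_right
     bilin_gram_left[OF inv sym] bilin_gram_right[OF inv] bilin_grad_left[OF f inv sym]
     bilin_grad_right[OF f inv] sym3_euler_first sym3_euler_first' cform_d1_euler'
  unfolding logd4_def gram_entry[OF f] sym3_swap12[of C j i k] sym3_swap12[of C l i k]
    sym3_swap23[of C i l k] sym3_swap12[of C k j l] sym3_swap23[of C j k l]
    cform_d2_sym[of C l k] cform_d2_sym[of C k j]
  using f by (simp add: field_simps) algebra

lemma rpd_cform: "rpd k (cform C) = cform_d1 C k"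
  by (rule ext) (simp add: rpd_def DERIV_imp_deriv[OF cform_deriv])

lemma rpd_cform_d1: "rpd k (cform_d1 C i) = cform_d2 C i k"
  by (rule ext) (simp add: rpd_def DERIV_imp_deriv[OF cform_d1_deriv])

lemma rpd_cform_d2: "rpd k (cform_d2 C i j) y = sym3 C i j k"
  by (simp add: rpd_def DERIV_imp_deriv[OF cform_d2_deriv])

lemma cubic_form3_cform:
  assumes "cubic_form3 f"
  obtains C where "f = cform C"
  using assms unfolding cubic_form3_def cform_def by (auto simp: fun_eq_iff)

lemma f3_cform: "f3 (cform C) i k p y = sym3 C i k p"
  unfolding f3_def rpd_cform rpd_cform_d1 rpd_cform_d2 by (simp add: sym3_def)

lemma hessian3_cform: "hessian3 (cform C) y = (\<chi> i j. cform_d2 C i j y)"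
  unfolding hessian3_def rpd_cform rpd_cform_d1 by (simp add: cform_d2_sym)

lemma Imv_shift_real: "Imv (t + axis k (complex_of_real s)) = Imv t"
  by (simp add: Imv_def axis_def vec_eq_iff)

lemma Imv_shift_imag: "Imv (t + axis k (\<i> * complex_of_real s)) = Imv t + s *\<^sub>R axis k 1"
  by (simp add: Imv_def axis_def vec_eq_iff)

lemma wirtinger_of_imaginary_part:
  assumes V: "open V" and t: "Imv t \<in> V"
    and F: "\<And>t'. Imv t' \<in> V \<Longrightarrow> F t' = c * complex_of_real (h (Imv t'))"
    and D: "((\<lambda>s. h (Imv t + s *\<^sub>R axis k 1)) has_real_derivative D) (at 0)"
  shows "dt k F t = (- \<i> / 2 * c) * complex_of_real D"
    and "dtb k F t = (\<i> / 2 * c) * complex_of_real D"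
proof -
  have "dx k F t = vector_derivative (\<lambda>s::real. c * complex_of_real (h (Imv t))) (at 0)"
    unfolding dx_def using F t by (simp add: Imv_shift_real)
  then have x: "dx k F t = 0" by simp
  let ?S = "{s::real. Imv t + s *\<^sub>R axis k 1 \<in> V}"
  have S: "open ?S"
    using continuous_open_vimage[OF V, of "\<lambda>s::real. Imv t + s *\<^sub>R axis k 1"]
    by (auto simp: vimage_def intro!: continuous_intros)
  have "((\<lambda>s. c * complex_of_real (h (Imv t + s *\<^sub>R axis k 1)))
      has_vector_derivative c * complex_of_real D) (at 0)"
    by (intro has_vector_derivative_mult_right has_vector_derivative_of_real D)
  then have "((\<lambda>s::real. F (t + axis k (\<i> * complex_of_real s)))
      has_vector_derivative c * complex_of_real D) (at 0)"
    by (rule has_vector_derivative_transform_within_open[OF _ S])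
      (use t F in \<open>auto simp: Imv_shift_imag\<close>)
  then have y: "dy k F t = c * complex_of_real D"
    unfolding dy_def by (rule vector_derivative_at)
  show "dt k F t = (- \<i> / 2 * c) * complex_of_real D"
    unfolding dt_def x y by (simp add: field_simps)
  show "dtb k F t = (\<i> / 2 * c) * complex_of_real D"
    unfolding dtb_def x y by (simp add: field_simps)
qed

lemma open_cform_pos: "open {y. 0 < cform C y}"
  unfolding cform_def by (intro open_Collect_less continuous_intros)

lemma dtb_amwp_potential:
  assumes "0 < cform C (Imv t)"
  shows "dtb j (amwp_potential (cform C)) t = (\<i> / 2) * complex_of_real (- logd1 C j (Imv t))"
proof -
  have "dtb j (amwp_potential (cform C)) t = (\<i> / 2 * 1) * complex_of_real (- logd1 C j (Imv t))"
    by (rule wirtinger_of_imaginary_part(2)[OF open_cform_pos, where h = "\<lambda>y. - ln (cform C y)"])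
      (use assms in \<open>auto simp: amwp_potential_def intro: neg_log_cform_deriv\<close>)
  then show ?thesis by simp
qed

lemma amwp_g_cform:
  assumes "0 < cform C (Imv t)"
  shows "amwp_g (cform C) i j t = complex_of_real (gram C (Imv t) $ i $ j)"
proof -
  have "amwp_g (cform C) i j t = (- \<i> / 2 * (\<i> / 2)) * complex_of_real (- logd2 C j i (Imv t))"
    unfolding amwp_g_def
    by (rule wirtinger_of_imaginary_part(1)[OF open_cform_pos, where h = "\<lambda>y. - logd1 C j y"])
      (use assms in \<open>auto simp: dtb_amwp_potential intro!: derivative_eq_intros logd1_deriv\<close>)
  then show ?thesis by (simp add: gram_def logd2_sym[of C j i] field_simps)
qed

lemma dt_amwp_g:
  assumes "0 < cform C (Imv t)"
  shows "dt k (amwp_g (cform C) i e) t = \<i> * complex_of_real (logd3 C e i k (Imv t) / 8)"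
proof -
  have "dt k (amwp_g (cform C) i e) t = (- \<i> / 2 * 1) * complex_of_real (- logd3 C e i k (Imv t) / 4)"
    by (rule wirtinger_of_imaginary_part(1)[OF open_cform_pos, where h = "\<lambda>y. - logd2 C e i y / 4"])
      (use assms in \<open>auto simp: amwp_g_cform gram_def logd2_sym[of C i e]
        intro!: derivative_eq_intros logd2_deriv\<close>)
  then show ?thesis by (simp add: field_simps)
qed

lemma dtb_amwp_g:
  assumes "0 < cform C (Imv t)"
  shows "dtb l (amwp_g (cform C) d j) t = - \<i> * complex_of_real (logd3 C d j l (Imv t) / 8)"
proof -
  have "dtb l (amwp_g (cform C) d j) t = (\<i> / 2 * 1) * complex_of_real (- logd3 C d j l (Imv t) / 4)"
    by (rule wirtinger_of_imaginary_part(2)[OF open_cform_pos, where h = "\<lambda>y. - logd2 C d j y / 4"])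
      (use assms in \<open>auto simp: amwp_g_cform gram_def intro!: derivative_eq_intros logd2_deriv\<close>)
  then show ?thesis by (simp add: field_simps)
qed

lemma dt_dtb_amwp_g:
  assumes "0 < cform C (Imv t)"
  shows "dt k (dtb l (amwp_g (cform C) i j)) t = complex_of_real (- logd4 C i j l k (Imv t) / 16)"
proof -
  have "dt k (dtb l (amwp_g (cform C) i j)) t = (- \<i> / 2 * - \<i>) * complex_of_real (logd4 C i j l k (Imv t) / 8)"
    by (rule wirtinger_of_imaginary_part(1)[OF open_cform_pos, where h = "\<lambda>y. logd3 C i j l y / 8"])
      (use assms in \<open>auto simp: dtb_amwp_g intro!: derivative_eq_intros logd3_deriv\<close>)
  then show ?thesis by (simp add: field_simps)
qed

definition cmat :: "real^'n^'m \<Rightarrow> complex^'n^'m" where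
  "cmat A = (\<chi> i j. complex_of_real (A $ i $ j))"

lemma cmat_mult: "cmat A ** cmat B = cmat (A ** B)"
  by (simp add: vec_eq_iff cmat_def matrix_matrix_mult_def)

lemma cmat_1: "cmat (mat 1) = mat 1"
  by (simp add: vec_eq_iff cmat_def mat_def)

lemma matrix_inv_unique:
  fixes X Y :: "'a::comm_ring_1^'n^'n"
  assumes "X ** Y = mat 1" "Y ** X = mat 1"
  shows "matrix_inv X = Y"
proof -
  have "X ** matrix_inv X = mat 1 \<and> matrix_inv X ** X = mat 1"
    unfolding matrix_inv_def by (rule someI[of _ Y]) (use assms in blast)
  then have "matrix_inv X = matrix_inv X ** (X ** Y)" and "matrix_inv X ** X = mat 1"
    using assms by simp_all
  then show ?thesis by (simp add: matrix_mul_assoc)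
qed

lemma amwp_ginv_cform:
  assumes "0 < cform C (Imv t)" "B ** gram C (Imv t) = mat 1" "gram C (Imv t) ** B = mat 1"
  shows "amwp_ginv (cform C) t e d = complex_of_real (B $ e $ d)"
proof -
  have "amwp_gmat (cform C) t = cmat (gram C (Imv t))"
    using assms(1) by (simp add: vec_eq_iff amwp_gmat_def cmat_def amwp_g_cform)
  then have "matrix_inv (amwp_gmat (cform C) t) = cmat B"
    using assms(2,3) by (simp add: matrix_inv_unique cmat_mult cmat_1)
  then show ?thesis unfolding amwp_ginv_def by (simp add: cmat_def)
qed

lemma amwp_R_cform:
  assumes "0 < cform C (Imv t)" "B ** gram C (Imv t) = mat 1" "gram C (Imv t) ** B = mat 1"
  shows "amwp_R (cform C) i j k l t = complex_of_real (- logd4 C i j l k (Imv t) / 16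
     - bilin B (\<lambda>e. logd3 C e i k (Imv t)) (\<lambda>d. logd3 C d j l (Imv t)) / 64)"
  unfolding amwp_R_def bilin_def dt_dtb_amwp_g[OF assms(1)] dt_amwp_g[OF assms(1)]
    dtb_amwp_g[OF assms(1)] amwp_ginv_cform[OF assms]
  by (simp add: sum_divide_distrib field_simps)

lemma bilin_sym3:
  assumes "transpose M = M"
  shows "bilin M (\<lambda>e. sym3 C e i k) (\<lambda>d. sym3 C d j l)
       = (\<Sum>p\<in>UNIV. \<Sum>q\<in>UNIV. M $ q $ p * sym3 C i k p * sym3 C j l q)"
proof -
  have "M $ q $ p = M $ p $ q" for p q
    using assms by (metis transpose_def vec_lambda_beta)
  then show ?thesis
    unfolding bilin_def by (subst sum.swap) (simp add: sym3_def algebra_simps)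
qed

theorem lemma2p9:
  fixes f :: "real^3 \<Rightarrow> real" and t :: "complex^3" and i j k l :: 3
  assumes "cubic_form3 f"
    and "Imv t \<in> index_cone3 f"
  shows "amwp_R f i j k l t =
      amwp_g f i j t * amwp_g f k l t + amwp_g f i l t * amwp_g f k j t
      - (\<Sum>p\<in>UNIV. \<Sum>q\<in>UNIV. amwp_ginv f t q p
            * complex_of_real (f3 f i k p (Imv t)) * complex_of_real (f3 f j l q (Imv t))
            / (64 * complex_of_real (f (Imv t)) ^ 2))"
proof -
  obtain C where f: "f = cform C" using assms(1) by (rule cubic_form3_cform)
  have pos: "0 < cform C (Imv t)" and sg: "has_signature (\<chi> i j. cform_d2 C i j (Imv t)) 1 2"
    using assms(2) unfolding f index_cone3_def hessian3_cform by auto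
  have nz: "cform C (Imv t) \<noteq> 0" using pos by simp
  have "transpose (\<chi> i j. cform_d2 C i j (Imv t)) = (\<chi> i j. cform_d2 C i j (Imv t))"
    by (simp add: vec_eq_iff transpose_def cform_d2_sym)
  then have hess: "(\<chi> i j. cform_d2 C i j (Imv t)) *v w = 0 \<Longrightarrow> w = 0" for w
    using signature_nondegenerate[OF _ sg] by simp
  obtain B where left: "B ** gram C (Imv t) = mat 1" and right: "gram C (Imv t) ** B = mat 1"
    and sym: "transpose B = B"
    using gram_symmetric_inverse[OF nz hess] .
  have "amwp_R f i j k l t = complex_of_real (- logd4 C i j l k (Imv t) / 16
      - bilin B (\<lambda>e. logd3 C e i k (Imv t)) (\<lambda>d. logd3 C d j l (Imv t)) / 64)"
    unfolding f by (rule amwp_R_cform[OF pos left right])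
  also have "\<dots> = complex_of_real (gram C (Imv t) $ i $ j * gram C (Imv t) $ k $ l
      + gram C (Imv t) $ i $ l * gram C (Imv t) $ k $ j
      - bilin B (\<lambda>e. sym3 C e i k) (\<lambda>d. sym3 C d j l) / (64 * cform C (Imv t) ^ 2))"
    by (simp only: curvature_identity[OF nz left sym])
  finally show ?thesis
    unfolding f amwp_g_cform[OF pos] amwp_ginv_cform[OF pos left right] f3_cform bilin_sym3[OF sym]
    by (simp add: sum_divide_distrib)
qed

end
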